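(* Let $\mu,\nu$ be Borel probability measures on $\mathbb{R}$. Then $$W_1(\mu,\nu)=W_1(\mu^l,\nu^l)+W_1(\mu^r,\nu^r),$$ where $\mu^l,\mu^r$ (and likewise $\nu^l,\nu^r$) are defined below.
   Context: For a probability measure $\mu$ on $\mathbb{R}$ let $B(\mu)=\sup\{x\in\mathbb{R}:\mu(-\infty,x]\le\tfrac12\}$ and, when $\mu\{B(\mu)\}>0$, $b_\mu=\bigl(\tfrac12-\mu(-\infty,B(\mu))\bigr)/\mu\{B(\mu)\}$ (when $\mu\{B(\mu)\}=0$ the atom terms below vanish). Define $\mu^l=\mu\,\mathbf 1_{(-\infty,B(\mu))}+b_\mu\,\mu\{B(\mu)\}\,\delta_{B(\mu)}$ and $\mu^r=\mu\,\mathbf 1_{(B(\mu),\infty)}+(1-b_\mu)\,\mu\{B(\mu)\}\,\delta_{B(\mu)}$; these are nonnegative measures of mass $\tfrac12$ each. For nonnegative finite measures $\alpha,\beta$ on $\mathbb{R}$ of equal mass, $W_1(\alpha,\beta)=\inf\int|x-y|\,d\gamma(x,y)$ over all nonnegative measures $\gamma$ on $\mathbb{R}^2$ with marginals $\alpha$ and $\beta$. *)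

theory Defs
  imports "HOL-Probability.Probability"
begin

definition medB :: "real measure \<Rightarrow> real" where
  "medB \<mu> = Sup {x. measure \<mu> {..x} \<le> 1/2}"

text \<open>b_mu; when the atom at B(mu) has mass 0 the atom terms vanish, value irrelevant (set to 0).\<close>
definition bcoef :: "real measure \<Rightarrow> real" where
  "bcoef \<mu> = (if measure \<mu> {medB \<mu>} > 0
      then (1/2 - measure \<mu> {..<medB \<mu>}) / measure \<mu> {medB \<mu>} else 0)"

text \<open>mu^l = mu restricted to (-inf,B) + b_mu mu{B} delta_B, written as a density w.r.t. mu.\<close>
definition lpart :: "real measure \<Rightarrow> real measure" where
  "lpart \<mu> = density \<mu> (\<lambda>x. ennreal (indicator {..<medB \<mu>} x
      + (if x = medB \<mu> then bcoef \<mu> else 0)))"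

text \<open>mu^r = mu restricted to (B,inf) + (1 - b_mu) mu{B} delta_B.\<close>
definition rpart :: "real measure \<Rightarrow> real measure" where
  "rpart \<mu> = density \<mu> (\<lambda>x. ennreal (indicator {medB \<mu><..} x
      + (if x = medB \<mu> then 1 - bcoef \<mu> else 0)))"

definition couplings :: "real measure \<Rightarrow> real measure \<Rightarrow> (real \<times> real) measure set" where
  "couplings \<alpha> \<beta> = {\<gamma>. sets \<gamma> = sets (borel :: (real \<times> real) measure)
      \<and> distr \<gamma> borel fst = \<alpha> \<and> distr \<gamma> borel snd = \<beta>}"

definition W1 :: "real measure \<Rightarrow> real measure \<Rightarrow> ennreal" where
  "W1 \<alpha> \<beta> = (INF \<gamma>\<in>couplings \<alpha> \<beta>. \<integral>\<^sup>+ p. ennreal \<bar>fst p - snd p\<bar> \<partial>\<gamma>)"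

end

theory Submission
  imports Defs
begin

(* On the line, W1 is the L1 distance between distribution functions. Since |x - y| is the
   Lebesgue measure of the points t lying between x and y, every coupling gamma of alpha and beta
   costs the integral over t of gamma{x <= t < y} + gamma{y <= t < x}, which is at least
   |F_alpha t - F_beta t|; the quantile coupling u |-> (F_alpha^-1 u, F_beta^-1 u) attains this
   bound. The halves mu^l and mu^r have distribution functions min F (1/2) and max (F - 1/2) 0,
   and |a - b| = |min a (1/2) - min b (1/2)| + |max (a - 1/2) 0 - max (b - 1/2) 0|, so the
   integral splits. *)

definition transport_cost :: "(real \<times> real) measure \<Rightarrow> ennreal" where
  "transport_cost \<gamma> = (\<integral>\<^sup>+ p. ennreal \<bar>fst p - snd p\<bar> \<partial>\<gamma>)"

lemma borel_measurable_fst_snd [measurable]: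
  "fst \<in> borel_measurable (borel :: (real \<times> real) measure)"
  "snd \<in> borel_measurable (borel :: (real \<times> real) measure)"
  by (intro borel_measurable_continuous_onI continuous_intros)+

lemma abs_diff_eq_nn_integral_indicator:
  fixes x y :: real
  shows "ennreal \<bar>x - y\<bar> = (\<integral>\<^sup>+ t. indicator {q. fst q \<le> t \<and> t < snd q} (x, y)
      + indicator {q. snd q \<le> t \<and> t < fst q} (x, y) \<partial>lborel)"
proof -
  have "(\<integral>\<^sup>+ t. indicator {q. fst q \<le> t \<and> t < snd q} (x, y)
      + indicator {q. snd q \<le> t \<and> t < fst q} (x, y) \<partial>lborel)
      = (\<integral>\<^sup>+ t. indicator {min x y..<max x y} t \<partial>lborel)"
    by (intro nn_integral_cong) (auto simp: indicator_def)
  then show ?thesis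
    by (simp add: abs_real_def max_def min_def)
qed

lemma transport_cost_eq_nn_integral_crossings:
  assumes sets_\<gamma> [measurable_cong]: "sets \<gamma> = sets borel" and "sigma_finite_measure \<gamma>"
  shows "transport_cost \<gamma> = (\<integral>\<^sup>+ t. emeasure \<gamma> {q. fst q \<le> t \<and> t < snd q}
      + emeasure \<gamma> {q. snd q \<le> t \<and> t < fst q} \<partial>lborel)"
proof -
  interpret pair_sigma_finite \<gamma> lborel
    by (intro pair_sigma_finite.intro assms lborel.sigma_finite_measure_axioms)
  have "transport_cost \<gamma> = (\<integral>\<^sup>+ p. \<integral>\<^sup>+ t. indicator {q. fst q \<le> t \<and> t < snd q} p
      + indicator {q. snd q \<le> t \<and> t < fst q} p \<partial>lborel \<partial>\<gamma>)"
    unfolding transport_cost_def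
    by (intro nn_integral_cong) (simp add: abs_diff_eq_nn_integral_indicator)
  also have "\<dots> = (\<integral>\<^sup>+ t. \<integral>\<^sup>+ p. indicator {q. fst q \<le> t \<and> t < snd q} p
      + indicator {q. snd q \<le> t \<and> t < fst q} p \<partial>\<gamma> \<partial>lborel)"
    by (intro Fubini'[symmetric]) measurable
  also have "\<dots> = (\<integral>\<^sup>+ t. emeasure \<gamma> {q. fst q \<le> t \<and> t < snd q}
      + emeasure \<gamma> {q. snd q \<le> t \<and> t < fst q} \<partial>lborel)"
    by (intro nn_integral_cong) (simp add: nn_integral_add)
  finally show ?thesis .
qed

lemma (in finite_measure) abs_measure_diff_le_measure_Diff:
  assumes "A \<in> sets M" "B \<in> sets M"
  shows "\<bar>measure M A - measure M B\<bar> \<le> measure M (A - B) + measure M (B - A)"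
  using assms finite_measure_mono[of "A \<inter> B" A] finite_measure_mono[of "A \<inter> B" B]
  by (simp add: finite_measure_Diff' Int_commute)

lemma cdf_distr_fst_snd:
  assumes [measurable_cong]: "sets \<gamma> = sets borel"
  shows "cdf (distr \<gamma> borel fst) t = measure \<gamma> {q. fst q \<le> t}"
    and "cdf (distr \<gamma> borel snd) t = measure \<gamma> {q. snd q \<le> t}"
  using sets_eq_imp_space_eq[OF assms]
  by (simp_all add: cdf_def2 measure_distr vimage_def)

lemma nn_integral_abs_cdf_diff_le_transport_cost:
  assumes sets_\<gamma> [measurable_cong]: "sets \<gamma> = sets borel" and "finite_measure \<gamma>"
  shows "(\<integral>\<^sup>+ t. ennreal \<bar>cdf (distr \<gamma> borel fst) t - cdf (distr \<gamma> borel snd) t\<bar> \<partial>lborel)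
    \<le> transport_cost \<gamma>"
  unfolding transport_cost_eq_nn_integral_crossings[OF sets_\<gamma>
      finite_measure.sigma_finite_measure[OF assms(2)]]
proof (intro nn_integral_mono)
  interpret finite_measure \<gamma> by fact
  fix t :: real
  let ?A = "{q::real \<times> real. fst q \<le> t}" and ?B = "{q::real \<times> real. snd q \<le> t}"
  have "\<bar>measure \<gamma> ?A - measure \<gamma> ?B\<bar> \<le> measure \<gamma> (?A - ?B) + measure \<gamma> (?B - ?A)"
    by (intro abs_measure_diff_le_measure_Diff) measurable
  moreover have "?A - ?B = {q. fst q \<le> t \<and> t < snd q}" "?B - ?A = {q. snd q \<le> t \<and> t < fst q}"
    by auto
  ultimately show "ennreal \<bar>cdf (distr \<gamma> borel fst) t - cdf (distr \<gamma> borel snd) t\<bar>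
      \<le> emeasure \<gamma> {q. fst q \<le> t \<and> t < snd q} + emeasure \<gamma> {q. snd q \<le> t \<and> t < fst q}"
    by (simp add: cdf_distr_fst_snd[OF sets_\<gamma>] emeasure_eq_measure ennreal_leI
        flip: ennreal_plus)
qed

definition quantile :: "real measure \<Rightarrow> real \<Rightarrow> real" where
  "quantile M u = Inf {x. u \<le> cdf M x}"

lemma (in finite_borel_measure) right_continuous_mono_cdf:
  "right_continuous_mono (cdf M) 0 (measure M (space M))"
  by standard (auto intro: cdf_nondecreasing cdf_is_right_cont cdf_lim_at_top cdf_lim_at_bot monoI)

lemma (in finite_borel_measure) quantile_le_iff:
  assumes "0 < u" "u < measure M (space M)"
  shows "quantile M u \<le> x \<longleftrightarrow> u \<le> cdf M x"
  unfolding quantile_def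
  by (rule right_continuous_mono.pseudoinverse[OF right_continuous_mono_cdf assms, symmetric])

lemma (in finite_borel_measure) measurable_quantile:
  "quantile M \<in> borel_measurable (restrict_space lborel {0<..<measure M (space M)})"
proof -
  have "mono_on {0<..<measure M (space M)} (quantile M)"
    using right_continuous_mono.mono_I[OF right_continuous_mono_cdf]
    unfolding quantile_def[abs_def] by simp
  then show ?thesis
    by (simp add: measurable_cong_sets[OF sets_restrict_space_cong[OF sets_lborel] refl]
        borel_measurable_mono_on_fnc)
qed

lemma emeasure_lborel_Ioo_inter_Ioc:
  fixes a b m :: real
  assumes "0 \<le> a" "a \<le> m" "0 \<le> b" "b \<le> m"
  shows "emeasure lborel ({0<..<m} \<inter> {a<..b}) = ennreal (b - a)"
proof (cases "a \<le> b")
  case True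
  have "emeasure lborel {a<..<b} \<le> emeasure lborel ({0<..<m} \<inter> {a<..b})"
    using assms by (intro emeasure_mono) auto
  moreover have "emeasure lborel ({0<..<m} \<inter> {a<..b}) \<le> emeasure lborel {a..b}"
    by (intro emeasure_mono) auto
  ultimately show ?thesis
    using True by (simp add: antisym)
next
  case False
  then have "{0<..<m} \<inter> {a<..b} = {}"
    by auto
  then show ?thesis
    using False by (simp add: ennreal_neg)
qed

lemma (in finite_borel_measure) distr_quantile:
  "distr (restrict_space lborel {0<..<measure M (space M)}) borel (quantile M) = M"
proof (rule cdf_unique'[OF _ finite_borel_measure_axioms ext])
  let ?m = "measure M (space M)"
  let ?L = "restrict_space lborel {0<..<?m}"
  have "finite_measure ?L"
    by (intro finite_measureI) (simp add: space_restrict_space emeasure_restrict_space)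
  then show "finite_borel_measure (distr ?L borel (quantile M))"
    by (intro finite_borel_measure.intro finite_borel_measure_axioms.intro
        finite_measure.finite_measure_distr measurable_quantile) simp_all
  fix x
  have "quantile M -` {..x} \<inter> space ?L = {0<..<?m} \<inter> {0<..cdf M x}"
    by (auto simp: space_restrict_space quantile_le_iff)
  then have "emeasure (distr ?L borel (quantile M)) {..x}
      = emeasure lborel ({0<..<?m} \<inter> {0<..cdf M x})"
    by (simp add: emeasure_distr measurable_quantile emeasure_restrict_space)
  also have "\<dots> = ennreal (cdf M x)"
    using emeasure_lborel_Ioo_inter_Ioc[of 0 ?m "cdf M x"] cdf_nonneg cdf_bounded by simp
  finally show "cdf (distr ?L borel (quantile M)) x = cdf M x"
    using cdf_nonneg[of x] by (simp add: cdf_def2[of "distr _ _ _"] measure_def)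
qed

lemma finite_measure_coupling:
  assumes "\<gamma> \<in> couplings \<alpha> \<beta>" and "finite_measure \<alpha>"
  shows "finite_measure \<gamma>"
proof (rule finite_measureI)
  have sets_\<gamma> [measurable_cong]: "sets \<gamma> = sets borel" and marginal: "distr \<gamma> borel fst = \<alpha>"
    using assms(1) by (auto simp: couplings_def)
  have "emeasure \<gamma> (space \<gamma>) = emeasure (distr \<gamma> borel fst) (space (distr \<gamma> borel fst))"
    using sets_eq_imp_space_eq[OF sets_\<gamma>] by (simp add: emeasure_distr)
  then show "emeasure \<gamma> (space \<gamma>) \<noteq> \<infinity>"
    using finite_measure.emeasure_finite[OF assms(2)] by (simp add: marginal)
qed

lemma ennreal_minus_plus_ennreal_minus:
  fixes a b :: real
  shows "ennreal (a - b) + ennreal (b - a) = ennreal \<bar>a - b\<bar>"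
  by (cases "a \<le> b") (simp_all add: ennreal_neg)

definition quantile_coupling :: "real measure \<Rightarrow> real measure \<Rightarrow> (real \<times> real) measure" where
  "quantile_coupling \<alpha> \<beta> = distr (restrict_space lborel {0<..<measure \<alpha> (space \<alpha>)}) borel
    (\<lambda>u. (quantile \<alpha> u, quantile \<beta> u))"

context
  fixes \<alpha> \<beta> :: "real measure"
  assumes \<alpha>: "finite_borel_measure \<alpha>" and \<beta>: "finite_borel_measure \<beta>"
    and same_mass: "measure \<alpha> (space \<alpha>) = measure \<beta> (space \<beta>)"
begin

lemma measurable_quantile_pair [measurable]:
  "(\<lambda>u. (quantile \<alpha> u, quantile \<beta> u))
    \<in> restrict_space lborel {0<..<measure \<alpha> (space \<alpha>)} \<rightarrow>\<^sub>M borel"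
  using finite_borel_measure.measurable_quantile[OF \<alpha>] finite_borel_measure.measurable_quantile[OF \<beta>]
  by (simp add: same_mass)

lemma quantile_coupling_in_couplings: "quantile_coupling \<alpha> \<beta> \<in> couplings \<alpha> \<beta>"
proof -
  let ?L = "restrict_space lborel {0<..<measure \<alpha> (space \<alpha>)}"
  have "distr (quantile_coupling \<alpha> \<beta>) borel fst = distr ?L borel (quantile \<alpha>)"
    and "distr (quantile_coupling \<alpha> \<beta>) borel snd = distr ?L borel (quantile \<beta>)"
    by (simp_all add: quantile_coupling_def distr_distr comp_def)
  then show ?thesis
    using finite_borel_measure.distr_quantile[OF \<alpha>] finite_borel_measure.distr_quantile[OF \<beta>]
    by (simp add: couplings_def quantile_coupling_def same_mass)
qed

lemma transport_cost_quantile_coupling: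
  "transport_cost (quantile_coupling \<alpha> \<beta>) = (\<integral>\<^sup>+ t. ennreal \<bar>cdf \<alpha> t - cdf \<beta> t\<bar> \<partial>lborel)"
proof -
  let ?m = "measure \<alpha> (space \<alpha>)"
  let ?L = "restrict_space lborel {0<..<?m}"
  let ?Q = "\<lambda>u. (quantile \<alpha> u, quantile \<beta> u)"
  have crossings:
    "emeasure (quantile_coupling \<alpha> \<beta>) {q. fst q \<le> t \<and> t < snd q} = ennreal (cdf \<alpha> t - cdf \<beta> t)"
    "emeasure (quantile_coupling \<alpha> \<beta>) {q. snd q \<le> t \<and> t < fst q} = ennreal (cdf \<beta> t - cdf \<alpha> t)"
    for t
  proof -
    have "?Q -` {q. fst q \<le> t \<and> t < snd q} \<inter> space ?L = {0<..<?m} \<inter> {cdf \<beta> t<..cdf \<alpha> t}"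
      "?Q -` {q. snd q \<le> t \<and> t < fst q} \<inter> space ?L = {0<..<?m} \<inter> {cdf \<alpha> t<..cdf \<beta> t}"
      by (auto simp: space_restrict_space finite_borel_measure.quantile_le_iff[OF \<alpha>]
          finite_borel_measure.quantile_le_iff[OF \<beta>] same_mass simp flip: not_le)
    moreover have "0 \<le> cdf \<alpha> t" "cdf \<alpha> t \<le> ?m" "0 \<le> cdf \<beta> t" "cdf \<beta> t \<le> ?m"
      using finite_borel_measure.cdf_nonneg[OF \<alpha>] finite_borel_measure.cdf_bounded[OF \<alpha>]
        finite_borel_measure.cdf_nonneg[OF \<beta>] finite_borel_measure.cdf_bounded[OF \<beta>]
      by (auto simp: same_mass)
    ultimately show
      "emeasure (quantile_coupling \<alpha> \<beta>) {q. fst q \<le> t \<and> t < snd q} = ennreal (cdf \<alpha> t - cdf \<beta> t)"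
      "emeasure (quantile_coupling \<alpha> \<beta>) {q. snd q \<le> t \<and> t < fst q} = ennreal (cdf \<beta> t - cdf \<alpha> t)"
      by (simp_all add: quantile_coupling_def emeasure_distr emeasure_restrict_space
          emeasure_lborel_Ioo_inter_Ioc)
  qed
  have "quantile_coupling \<alpha> \<beta> \<in> couplings \<alpha> \<beta>"
    by (rule quantile_coupling_in_couplings)
  then have "sets (quantile_coupling \<alpha> \<beta>) = sets borel" "finite_measure (quantile_coupling \<alpha> \<beta>)"
    using finite_measure_coupling \<alpha> by (auto simp: couplings_def finite_borel_measure_def)
  then show ?thesis
    by (simp add: transport_cost_eq_nn_integral_crossings finite_measure.sigma_finite_measure crossings
        ennreal_minus_plus_ennreal_minus)
qed

theorem W1_eq_nn_integral_abs_cdf_diff: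
  "W1 \<alpha> \<beta> = (\<integral>\<^sup>+ t. ennreal \<bar>cdf \<alpha> t - cdf \<beta> t\<bar> \<partial>lborel)"
proof (rule antisym)
  have W1_eq: "W1 \<alpha> \<beta> = (INF \<gamma>\<in>couplings \<alpha> \<beta>. transport_cost \<gamma>)"
    unfolding W1_def transport_cost_def ..
  show "W1 \<alpha> \<beta> \<le> (\<integral>\<^sup>+ t. ennreal \<bar>cdf \<alpha> t - cdf \<beta> t\<bar> \<partial>lborel)"
    unfolding W1_eq transport_cost_quantile_coupling[symmetric]
    by (intro INF_lower quantile_coupling_in_couplings)
  show "(\<integral>\<^sup>+ t. ennreal \<bar>cdf \<alpha> t - cdf \<beta> t\<bar> \<partial>lborel) \<le> W1 \<alpha> \<beta>"
    unfolding W1_eq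
  proof (rule INF_greatest)
    fix \<gamma> assume \<gamma>: "\<gamma> \<in> couplings \<alpha> \<beta>"
    then have "finite_measure \<gamma>"
      using \<alpha> finite_measure_coupling by (auto simp: finite_borel_measure_def)
    with \<gamma> show "(\<integral>\<^sup>+ t. ennreal \<bar>cdf \<alpha> t - cdf \<beta> t\<bar> \<partial>lborel) \<le> transport_cost \<gamma>"
      using nn_integral_abs_cdf_diff_le_transport_cost by (auto simp: couplings_def)
  qed
qed

end

lemma (in real_distribution)
  shows cdf_below_medB: "t < medB M \<Longrightarrow> cdf M t \<le> 1/2"
    and cdf_above_medB: "medB M < t \<Longrightarrow> 1/2 < cdf M t"
proof -
  let ?S = "{x. cdf M x \<le> 1/2}"
  have medB_eq: "medB M = Sup ?S"
    by (simp add: medB_def cdf_def2)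
  have "eventually (\<lambda>x. cdf M x < 1/2) at_bot"
    using cdf_lim_at_bot by (rule order_tendstoD) simp
  then obtain x0 where "cdf M x0 < 1/2"
    by (auto simp: eventually_at_bot_linorder)
  then have nonempty: "?S \<noteq> {}"
    by (auto intro: less_imp_le)
  have "eventually (\<lambda>x. 1/2 < cdf M x) at_top"
    using cdf_lim_at_top_prob by (rule order_tendstoD) simp
  then obtain x1 where x1: "\<And>x. x1 \<le> x \<Longrightarrow> 1/2 < cdf M x"
    by (auto simp: eventually_at_top_linorder)
  have bounded: "bdd_above ?S"
  proof (rule bdd_aboveI)
    fix x assume "x \<in> ?S"
    then show "x \<le> x1"
      using x1[of x] by (cases "x1 \<le> x") auto
  qed
  show "cdf M t \<le> 1/2" if "t < medB M"
  proof -
    have "t < Sup ?S"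
      using that by (simp only: medB_eq)
    then obtain s where "s \<in> ?S" "t < s"
      using less_cSup_iff[OF nonempty bounded] by blast
    then show ?thesis
      using cdf_nondecreasing[of t s] by simp
  qed
  show "1/2 < cdf M t" if "medB M < t"
    using that cSup_upper[OF _ bounded, of t] by (force simp: medB_eq)
qed

lemma (in real_distribution) half_le_cdf_medB: "1/2 \<le> cdf M (medB M)"
proof (rule tendsto_lowerbound)
  show "(cdf M \<longlongrightarrow> cdf M (medB M)) (at_right (medB M))"
    using cdf_is_right_cont by (simp add: continuous_within)
  show "eventually (\<lambda>x. 1/2 \<le> cdf M x) (at_right (medB M))"
    by (intro eventually_at_rightI[of _ "medB M + 1"] less_imp_le cdf_above_medB) auto
qed simp

lemma (in real_distribution) measure_lessThan_medB_le_half: "measure M {..<medB M} \<le> 1/2"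
proof (rule tendsto_upperbound)
  show "(cdf M \<longlongrightarrow> measure M {..<medB M}) (at_left (medB M))"
    by (rule cdf_at_left)
  show "eventually (\<lambda>x. cdf M x \<le> 1/2) (at_left (medB M))"
    by (intro eventually_at_leftI[of "medB M - 1"] cdf_below_medB) auto
qed simp

lemma (in finite_borel_measure) measure_lessThan_add_measure_singleton:
  "measure M {..<x} + measure M {x} = cdf M x"
  unfolding cdf_def2 ivl_disj_un_singleton(2)[symmetric]
  by (rule finite_measure_Union[symmetric]) auto

lemma (in real_distribution)
  shows bcoef_nonneg: "0 \<le> bcoef M"
    and bcoef_le_1: "bcoef M \<le> 1"
    and bcoef_mult_atom: "bcoef M * measure M {medB M} = 1/2 - measure M {..<medB M}"
proof -
  have "measure M {..<medB M} \<le> 1/2" "1/2 \<le> measure M {..<medB M} + measure M {medB M}"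
    using measure_lessThan_medB_le_half half_le_cdf_medB
    by (simp_all add: measure_lessThan_add_measure_singleton)
  moreover have "0 \<le> measure M {medB M}"
    by simp
  ultimately show "0 \<le> bcoef M" "bcoef M \<le> 1"
    "bcoef M * measure M {medB M} = 1/2 - measure M {..<medB M}"
    by (auto simp: bcoef_def divide_le_eq_1)
qed

lemma (in finite_measure) emeasure_density_indicator_plus_point_mass:
  assumes [measurable]: "K \<in> sets M" "{b} \<in> sets M" "A \<in> sets M"
    and "b \<notin> K" "0 \<le> c"
  shows "emeasure (density M (\<lambda>x. ennreal (indicator K x + (if x = b then c else 0)))) A
    = ennreal (measure M (K \<inter> A) + c * measure M ({b} \<inter> A))"
proof -
  have density_eq: "(\<lambda>x. ennreal (indicator K x + (if x = b then c else 0)))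
      = (\<lambda>x. indicator K x + ennreal c * indicator {b} x)"
    using assms(4,5) by (auto simp: indicator_def)
  have "emeasure (density M (\<lambda>x. indicator K x + ennreal c * indicator {b} x)) A
      = (\<integral>\<^sup>+ x. indicator (K \<inter> A) x + ennreal c * indicator ({b} \<inter> A) x \<partial>M)"
    by (simp add: emeasure_density indicator_inter_arith distrib_right mult.assoc)
  also have "\<dots> = emeasure M (K \<inter> A) + ennreal c * emeasure M ({b} \<inter> A)"
    by (simp add: nn_integral_add nn_integral_cmult_indicator)
  also have "\<dots> = ennreal (measure M (K \<inter> A) + c * measure M ({b} \<inter> A))"
    using assms(5) by (simp add: emeasure_eq_measure ennreal_plus ennreal_mult)
  finally show ?thesis
    unfolding density_eq .
qed

context real_distribution
begin

lemma emeasure_lpart: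
  assumes "A \<in> sets borel"
  shows "emeasure (lpart M) A
    = ennreal (measure M ({..<medB M} \<inter> A) + bcoef M * measure M ({medB M} \<inter> A))"
  unfolding lpart_def
  using assms bcoef_nonneg by (intro emeasure_density_indicator_plus_point_mass) auto

lemma emeasure_rpart:
  assumes "A \<in> sets borel"
  shows "emeasure (rpart M) A
    = ennreal (measure M ({medB M<..} \<inter> A) + (1 - bcoef M) * measure M ({medB M} \<inter> A))"
  unfolding rpart_def
  using assms bcoef_le_1 by (intro emeasure_density_indicator_plus_point_mass) auto

lemma measure_lpart:
  assumes "A \<in> sets borel"
  shows "measure (lpart M) A = measure M ({..<medB M} \<inter> A) + bcoef M * measure M ({medB M} \<inter> A)"
  unfolding measure_def[of "lpart M"] emeasure_lpart[OF assms]
  by (intro enn2real_ennreal add_nonneg_nonneg mult_nonneg_nonneg measure_nonneg bcoef_nonneg)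

lemma measure_rpart:
  assumes "A \<in> sets borel"
  shows "measure (rpart M) A
    = measure M ({medB M<..} \<inter> A) + (1 - bcoef M) * measure M ({medB M} \<inter> A)"
  unfolding measure_def[of "rpart M"] emeasure_rpart[OF assms]
  using bcoef_le_1 by (intro enn2real_ennreal add_nonneg_nonneg mult_nonneg_nonneg measure_nonneg) simp

lemma finite_borel_measure_lpart: "finite_borel_measure (lpart M)"
  by (intro finite_borel_measure.intro finite_measureI finite_borel_measure_axioms.intro)
    (simp_all add: lpart_def emeasure_lpart[simplified lpart_def])

lemma finite_borel_measure_rpart: "finite_borel_measure (rpart M)"
  by (intro finite_borel_measure.intro finite_measureI finite_borel_measure_axioms.intro)
    (simp_all add: rpart_def emeasure_rpart[simplified rpart_def])

lemma measure_space_lpart: "measure (lpart M) (space (lpart M)) = 1/2"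
  using measure_lpart[of UNIV] bcoef_mult_atom by (simp add: lpart_def)

lemma measure_space_rpart: "measure (rpart M) (space (rpart M)) = 1/2"
proof -
  have "measure M {medB M<..} = 1 - cdf M (medB M)"
    using prob_compl[of "{..medB M}"] by (simp add: cdf_def2 Compl_eq_Diff_UNIV[symmetric])
  then show ?thesis
    using bcoef_mult_atom measure_lessThan_add_measure_singleton[of "medB M"] measure_rpart[of UNIV]
    by (simp add: rpart_def algebra_simps)
qed

lemma cdf_lpart: "cdf (lpart M) t = min (cdf M t) (1/2)"
proof (cases "t < medB M")
  case True
  then have "{..<medB M} \<inter> {..t} = {..t}" "{medB M} \<inter> {..t} = {}"
    by auto
  then show ?thesis
    using cdf_below_medB[OF True] by (simp add: cdf_def2 measure_lpart)
next
  case False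
  then have "{..<medB M} \<inter> {..t} = {..<medB M}" "{medB M} \<inter> {..t} = {medB M}"
    by auto
  moreover have "1/2 \<le> cdf M t"
    using half_le_cdf_medB cdf_nondecreasing[of "medB M" t] False by simp
  ultimately show ?thesis
    by (simp add: cdf_def2[of "lpart M"] measure_lpart bcoef_mult_atom)
qed

lemma cdf_rpart: "cdf (rpart M) t = max (cdf M t - 1/2) 0"
proof (cases "t < medB M")
  case True
  then have "{medB M<..} \<inter> {..t} = {}" "{medB M} \<inter> {..t} = {}"
    by auto
  then show ?thesis
    using cdf_below_medB[OF True] by (simp add: cdf_def2[of "rpart M"] measure_rpart)
next
  case False
  then have "{medB M<..} \<inter> {..t} = {medB M<..t}" "{medB M} \<inter> {..t} = {medB M}"
    by auto
  moreover have "measure M {medB M<..t} = cdf M t - cdf M (medB M)"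
    using emeasure_Ioc[of "medB M" t] False cdf_nondecreasing[of "medB M" t]
    by (simp add: emeasure_eq_measure)
  moreover have "1/2 \<le> cdf M t"
    using half_le_cdf_medB cdf_nondecreasing[of "medB M" t] False by simp
  ultimately show ?thesis
    using bcoef_mult_atom measure_lessThan_add_measure_singleton[of "medB M"]
    by (simp add: cdf_def2[of "rpart M"] measure_rpart algebra_simps)
qed

end

lemma (in finite_borel_measure) borel_measurable_cdf: "cdf M \<in> borel_measurable borel"
  by (intro borel_measurable_mono monoI cdf_nondecreasing)

lemma abs_diff_split_at:
  fixes a b c :: real
  shows "\<bar>a - b\<bar> = \<bar>min a c - min b c\<bar> + \<bar>max (a - c) 0 - max (b - c) 0\<bar>"
  by (auto simp: min_def max_def abs_if)

theorem lemma6p4: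
  fixes \<mu> \<nu> :: "real measure"
  assumes "prob_space \<mu>" and "sets \<mu> = sets borel"
    and "prob_space \<nu>" and "sets \<nu> = sets borel"
  shows "W1 \<mu> \<nu> = W1 (lpart \<mu>) (lpart \<nu>) + W1 (rpart \<mu>) (rpart \<nu>)"
proof -
  interpret \<mu>: real_distribution \<mu>
    using assms(1,2) by (simp add: real_distribution_def real_distribution_axioms_def)
  interpret \<nu>: real_distribution \<nu>
    using assms(3,4) by (simp add: real_distribution_def real_distribution_axioms_def)
  have [measurable]: "cdf \<mu> \<in> borel_measurable borel" "cdf \<nu> \<in> borel_measurable borel"
    by (fact \<mu>.borel_measurable_cdf \<nu>.borel_measurable_cdf)+
  have "W1 \<mu> \<nu> = (\<integral>\<^sup>+ t. ennreal \<bar>cdf \<mu> t - cdf \<nu> t\<bar> \<partial>lborel)"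
    by (intro W1_eq_nn_integral_abs_cdf_diff \<mu>.finite_borel_measure_M \<nu>.finite_borel_measure_M)
      (simp only: \<mu>.prob_space \<nu>.prob_space)
  also have "\<dots> = (\<integral>\<^sup>+ t. ennreal \<bar>min (cdf \<mu> t) (1/2) - min (cdf \<nu> t) (1/2)\<bar>
      + ennreal \<bar>max (cdf \<mu> t - 1/2) 0 - max (cdf \<nu> t - 1/2) 0\<bar> \<partial>lborel)"
    by (intro nn_integral_cong) (simp flip: ennreal_plus abs_diff_split_at)
  also have "\<dots> = (\<integral>\<^sup>+ t. ennreal \<bar>min (cdf \<mu> t) (1/2) - min (cdf \<nu> t) (1/2)\<bar> \<partial>lborel)
      + (\<integral>\<^sup>+ t. ennreal \<bar>max (cdf \<mu> t - 1/2) 0 - max (cdf \<nu> t - 1/2) 0\<bar> \<partial>lborel)"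
    by (intro nn_integral_add) measurable
  also have "\<dots> = W1 (lpart \<mu>) (lpart \<nu>) + W1 (rpart \<mu>) (rpart \<nu>)"
    by (simp add: W1_eq_nn_integral_abs_cdf_diff
        \<mu>.finite_borel_measure_lpart \<nu>.finite_borel_measure_lpart
        \<mu>.finite_borel_measure_rpart \<nu>.finite_borel_measure_rpart \<mu>.measure_space_lpart
        \<nu>.measure_space_lpart \<mu>.measure_space_rpart \<nu>.measure_space_rpart
        \<mu>.cdf_lpart \<nu>.cdf_lpart \<mu>.cdf_rpart \<nu>.cdf_rpart)
  finally show ?thesis .
qed

end
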